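(* Let $g \ge h \ge 2$ be integers. There is a constant $C>0$ depending only on $g$ and $h$ such that for every infinite $C_h[g]$ set $A$ of positive integers, $$\liminf_{x \to \infty} A(x)\cdot \frac{(x\log x)^{1/h}}{x} \le C,$$ where $A(x) = |\{a \in A : a \le x\}|$ is the counting function of $A$.
   Context: A set of integers $A$ is called a $C_h[g]$ set if for every set $X$ of $h$ integers there do not exist $g$ distinct integers $k_1,\dots,k_g$ such that $X+k_i \subset A$ for all $i=1,\dots,g$ (here $X+k=\{x+k : x\in X\}$). In words, $A$ contains no $g$ distinct translates of a common $h$-element set. *)

theory Defs
  imports "HOL-Analysis.Analysis"
begin

definition Ch_set :: "nat \<Rightarrow> nat \<Rightarrow> int set \<Rightarrow> bool" where
  "Ch_set h g A \<longleftrightarrow>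
     \<not> (\<exists>X K. finite X \<and> card X = h \<and> finite K \<and> card K = g \<and>
              (\<forall>k\<in>K. (\<lambda>x. x + k) ` X \<subseteq> A))"

definition count_fn :: "int set \<Rightarrow> real \<Rightarrow> nat" where
  "count_fn A x = card {a \<in> A. real_of_int a \<le> x}"

end

theory Submission
  imports Defs
begin

text \<open>Enumerate A as a_0 < a_1 < \<dots>. Every h-element set X \<subseteq> A is a translate of its shape,
  a set S \<subseteq> \<nat> with 0 \<in> S and Max S = diam X, and the C_h[g] property says that fewer than g
  sets X share a shape. Since at most D^{h-2} shapes have diameter D, the sum of
  diam X^{1-h} over all such X of diameter at most M is at most (g-1) H_M \<approx> (g-1) log M.
  On the other hand, if A(x) exceeded C x/(x log x)^{1/h} for all large x, then a_n grows
  polynomially and a_{j+r} - a_j is small for many j; choosing the X with a_j = min X, a_{j+r} = max X,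
  j in a dyadic block [m, 2m), makes every such block contribute at least a constant multiple of C^h.
  Summing over d dyadic blocks gives a lower bound linear in d against the upper bound
  (g-1)(1 + O(d)), which fails when C is large.\<close>

subsection \<open>Shapes of finite sets of integers\<close>

definition shape :: "int set \<Rightarrow> nat set" where
  "shape X = (\<lambda>x. nat (x - Min X)) ` X"

lemma shape_translate:
  assumes "finite X" "X \<noteq> {}"
  shows "(\<lambda>s. int s + Min X) ` shape X = X"
proof -
  have "\<And>x. x \<in> X \<Longrightarrow> Min X \<le> x" using assms by simp
  then show ?thesis unfolding shape_def image_image by (auto intro!: image_eqI)
qed

lemma
  assumes fX: "finite X" and ne: "X \<noteq> {}"
  shows card_shape: "card (shape X) = card X"
    and zero_in_shape: "0 \<in> shape X"
    and Max_shape: "Max (shape X) = nat (Max X - Min X)"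
    and shape_subset: "shape X \<subseteq> {0..nat (Max X - Min X)}"
proof -
  have lo: "\<And>x. x \<in> X \<Longrightarrow> Min X \<le> x" and hi: "\<And>x. x \<in> X \<Longrightarrow> x \<le> Max X"
    using fX ne by auto
  have "inj_on (\<lambda>x. nat (x - Min X)) X"
  proof (rule inj_onI)
    fix x y assume "x \<in> X" "y \<in> X" "nat (x - Min X) = nat (y - Min X)"
    then show "x = y" using lo[of x] lo[of y] by linarith
  qed
  then show "card (shape X) = card X" unfolding shape_def by (simp add: card_image)
  show "0 \<in> shape X" unfolding shape_def using Min_in[OF fX ne] by force
  have "mono (\<lambda>x. nat (x - Min X))" by (rule monoI) simp
  from mono_Max_commute[OF this fX ne] show "Max (shape X) = nat (Max X - Min X)"
    unfolding shape_def by simp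
  show "shape X \<subseteq> {0..nat (Max X - Min X)}" unfolding shape_def using hi by fastforce
qed

lemma Ch_set_card_same_shape_less:
  assumes Ch: "Ch_set h g A" and g1: "1 \<le> g" and F: "finite F" and S: "card S = h"
    and FA: "\<And>X. X \<in> F \<Longrightarrow> X \<subseteq> A \<and> finite X \<and> X \<noteq> {} \<and> shape X = S"
  shows "card F < g"
proof (rule ccontr)
  assume "\<not> card F < g"
  then obtain F' where F': "F' \<subseteq> F" "card F' = g"
    by (metis not_less obtain_subset_with_card_n)
  have translate: "X = (\<lambda>s. int s + Min X) ` S" if "X \<in> F'" for X
    using shape_translate[of X] FA[of X] that F' by auto
  have inj: "inj_on Min F'"
  proof
    fix X Y assume "X \<in> F'" "Y \<in> F'" "Min X = Min Y"
    then show "X = Y" using translate[of X] translate[of Y] by simp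
  qed
  obtain X0 where "X0 \<in> F'" using F' g1 by fastforce
  then have fS: "finite S" using FA F' unfolding shape_def by auto
  have "(\<lambda>x. x + k) ` int ` S \<subseteq> A" if "k \<in> Min ` F'" for k
  proof -
    obtain X where X: "X \<in> F'" "k = Min X" using \<open>k \<in> Min ` F'\<close> by blast
    then have "(\<lambda>x. x + k) ` int ` S = X" using translate[of X] by (simp add: image_image add.commute)
    moreover have "X \<in> F" using X F' by auto
    ultimately show ?thesis using FA by auto
  qed
  moreover have "finite (Min ` F')" "card (Min ` F') = g"
    using F' F inj finite_subset by (auto simp: card_image)
  moreover have "finite (int ` S)" "card (int ` S) = h" using fS S by (auto simp: card_image)
  ultimately show False using Ch unfolding Ch_set_def by blast
qed

lemma card_shapes_with_Max_le:
  assumes h2: "2 \<le> h" and D: "1 \<le> D"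
  shows "card {S. S \<subseteq> {0..M} \<and> 0 \<in> S \<and> card S = h \<and> Max S = D} \<le> D ^ (h - 2)"
proof -
  let ?F = "{S. S \<subseteq> {0..M} \<and> 0 \<in> S \<and> card S = h \<and> Max S = D}"
  let ?T = "{Y. Y \<subseteq> {1..<D} \<and> card Y = h - 2}"
  have D_in: "D \<in> S" if "S \<in> ?F" for S
  proof -
    have "finite S" "S \<noteq> {}" using that finite_subset by auto
    then show ?thesis using that Max_in by fastforce
  qed
  have "inj_on (\<lambda>S. S - {0, D}) ?F"
  proof
    fix S T assume S: "S \<in> ?F" and T: "T \<in> ?F" and eq: "S - {0, D} = T - {0, D}"
    then have "S = (S - {0, D}) \<union> {0, D}" "T = (T - {0, D}) \<union> {0, D}"
      using D_in[OF S] D_in[OF T] by auto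
    then show "S = T" using eq by metis
  qed
  moreover have "(\<lambda>S. S - {0, D}) ` ?F \<subseteq> ?T"
  proof
    fix Y assume "Y \<in> (\<lambda>S. S - {0, D}) ` ?F"
    then obtain S where S: "S \<in> ?F" and Y: "Y = S - {0, D}" by blast
    have fS: "finite S" using S finite_subset by auto
    have "x \<le> D" if "x \<in> S" for x using S fS that by auto
    then have "Y \<subseteq> {1..<D}" using Y by fastforce
    moreover have "card Y = h - 2" using S D_in[OF S] D fS Y by (simp add: card_Diff_subset)
    ultimately show "Y \<in> ?T" by blast
  qed
  ultimately have "card ?F \<le> card ?T" by (intro card_inj_on_le) auto
  also have "card ?T = (D - 1) choose (h - 2)" using n_subsets[of "{1..<D}" "h - 2"] by simp
  also have "\<dots> \<le> D ^ (h - 2)"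
  proof (cases "h - 2 \<le> D - 1")
    case True
    then have "(D - 1) choose (h - 2) \<le> (D - 1) ^ (h - 2)" by (rule binomial_le_pow)
    also have "\<dots> \<le> D ^ (h - 2)" by (simp add: power_mono)
    finally show ?thesis .
  qed (simp add: binomial_eq_0)
  finally show ?thesis .
qed

lemma sum_shapes_inverse_Max_power_le_harm:
  assumes h2: "2 \<le> h"
  shows "(\<Sum>S | S \<subseteq> {0..M} \<and> 0 \<in> S \<and> card S = h. 1 / real (Max S) ^ (h - 1)) \<le> harm M"
proof -
  let ?Sh = "{S. S \<subseteq> {0..M} \<and> 0 \<in> S \<and> card S = h}"
  let ?phi = "\<lambda>S. 1 / real (Max S) ^ (h - 1)"
  have fin: "finite ?Sh" by (rule finite_subset[of _ "Pow {0..M}"]) auto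
  have MaxD: "Max S \<in> {1..M}" if "S \<in> ?Sh" for S
  proof -
    have fS: "finite S" using that finite_subset by auto
    have "\<not> S \<subseteq> {0}"
    proof
      assume "S \<subseteq> {0}"
      then have "card S \<le> card {0::nat}" by (intro card_mono) auto
      then show False using that h2 by simp
    qed
    then obtain x where "x \<in> S" "x \<noteq> 0" by auto
    then have "x \<le> Max S" using fS by simp
    then have "1 \<le> Max S" using \<open>x \<noteq> 0\<close> by linarith
    moreover have "Max S \<in> S" using fS \<open>x \<in> S\<close> by (intro Max_in) auto
    then have "Max S \<le> M" using that by auto
    ultimately show ?thesis by simp
  qed
  have fiber: "(\<Sum>S | S \<in> ?Sh \<and> Max S = D. ?phi S) \<le> 1 / real D" if D: "1 \<le> D" for D
  proof -
    have "(\<Sum>S | S \<in> ?Sh \<and> Max S = D. ?phi S)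
        = real (card {S. S \<in> ?Sh \<and> Max S = D}) * (1 / real D ^ (h - 1))" by simp
    also have "\<dots> \<le> real (D ^ (h - 2)) * (1 / real D ^ (h - 1))"
      using card_shapes_with_Max_le[OF h2 D, of M] by (intro mult_right_mono) simp_all
    also have "\<dots> = 1 / real D"
    proof -
      have "h - 1 = Suc (h - 2)" using h2 by simp
      then show ?thesis using D by (simp add: field_simps)
    qed
    finally show ?thesis .
  qed
  have "(\<Sum>S\<in>?Sh. ?phi S) = (\<Sum>D\<in>Max ` ?Sh. \<Sum>S | S \<in> ?Sh \<and> Max S = D. ?phi S)"
    by (rule sum.image_gen[OF fin])
  also have "\<dots> \<le> (\<Sum>D\<in>Max ` ?Sh. 1 / real D)"
    using fiber MaxD by (intro sum_mono) force
  also have "\<dots> \<le> (\<Sum>D\<in>{1..M}. 1 / real D)"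
    by (rule sum_mono2) (use MaxD in auto)
  also have "\<dots> = harm M" unfolding harm_def by (simp add: divide_inverse)
  finally show ?thesis .
qed

lemma Ch_set_sum_inverse_diameter_power_le:
  assumes Ch: "Ch_set h g A" and h2: "2 \<le> h" and g1: "1 \<le> g" and F: "finite F"
    and FA: "\<And>X. X \<in> F \<Longrightarrow> X \<subseteq> A \<and> finite X \<and> card X = h \<and> Max X - Min X \<le> int M"
  shows "(\<Sum>X\<in>F. 1 / real_of_int (Max X - Min X) ^ (h - 1)) \<le> real (g - 1) * harm M"
proof -
  let ?Sh = "{S. S \<subseteq> {0..M} \<and> 0 \<in> S \<and> card S = h}"
  let ?phi = "\<lambda>S. 1 / real (Max S) ^ (h - 1)"
  have ne: "X \<noteq> {}" if "X \<in> F" for X using FA[OF that] h2 by auto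
  have shape_in: "shape X \<in> ?Sh" if "X \<in> F" for X
    using FA[OF that] ne[OF that] card_shape zero_in_shape shape_subset[of X] by fastforce
  have "(\<Sum>X\<in>F. 1 / real_of_int (Max X - Min X) ^ (h - 1)) = (\<Sum>X\<in>F. ?phi (shape X))"
  proof (rule sum.cong)
    fix X assume X: "X \<in> F"
    then have "Min X \<le> Max X" using FA[OF X] ne[OF X] by (meson Max_ge Min_in order_trans Min_le)
    then show "1 / real_of_int (Max X - Min X) ^ (h - 1) = ?phi (shape X)"
      using Max_shape[of X] FA[OF X] ne[OF X] by simp
  qed simp
  also have "\<dots> = (\<Sum>S\<in>shape ` F. \<Sum>X | X \<in> F \<and> shape X = S. ?phi (shape X))"
    by (rule sum.image_gen[OF F])
  also have "\<dots> \<le> (\<Sum>S\<in>shape ` F. real (g - 1) * ?phi S)"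
  proof (rule sum_mono)
    fix S assume "S \<in> shape ` F"
    then obtain X0 where "X0 \<in> F" "S = shape X0" by blast
    then have "card S = h" using FA ne card_shape by auto
    then have "card {X. X \<in> F \<and> shape X = S} < g"
      using F FA ne by (intro Ch_set_card_same_shape_less[OF Ch g1]) auto
    then have le: "real (card {X. X \<in> F \<and> shape X = S}) \<le> real (g - 1)" by simp
    have "(\<Sum>X | X \<in> F \<and> shape X = S. ?phi (shape X))
        = real (card {X. X \<in> F \<and> shape X = S}) * ?phi S" by simp
    also have "\<dots> \<le> real (g - 1) * ?phi S" using le by (rule mult_right_mono) simp
    finally show "(\<Sum>X | X \<in> F \<and> shape X = S. ?phi (shape X)) \<le> real (g - 1) * ?phi S" .
  qed
  also have "\<dots> = real (g - 1) * (\<Sum>S\<in>shape ` F. ?phi S)" by (simp add: sum_distrib_left)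
  also have "\<dots> \<le> real (g - 1) * (\<Sum>S\<in>?Sh. ?phi S)"
    using shape_in by (intro mult_left_mono sum_mono2) (auto intro: finite_subset[of _ "Pow {0..M}"])
  also have "\<dots> \<le> real (g - 1) * harm M"
    by (rule mult_left_mono[OF sum_shapes_inverse_Max_power_le_harm[OF h2]]) simp
  finally show ?thesis .
qed

subsection \<open>Gap sums of an increasing sequence\<close>

text \<open>Since (r-1 choose h-2) counts the h-element subsets of {j, \<dots>, j+r} containing both j and j+r,
  gap_sum h a N0 N1 is the sum of (a (max I) - a (min I))^{1-h} over all h-element index sets I
  with min I \<in> [N0, N1) and max I \<le> 2 min I.\<close>

definition gap_sum :: "nat \<Rightarrow> (nat \<Rightarrow> real) \<Rightarrow> nat \<Rightarrow> nat \<Rightarrow> real" where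
  "gap_sum h a N0 N1 =
     (\<Sum>j\<in>{N0..<N1}. \<Sum>r\<in>{1..j}. real ((r - 1) choose (h - 2)) / (a (j + r) - a j) ^ (h - 1))"

lemma gap_sum_dyadic_blocks:
  "(\<Sum>k\<in>{k0..<k0 + d}. gap_sum h a (2 ^ k) (2 ^ Suc k)) = gap_sum h a (2 ^ k0) (2 ^ (k0 + d))"
proof (induction d)
  case (Suc d)
  have "gap_sum h a (2 ^ k0) (2 ^ (k0 + d)) + gap_sum h a (2 ^ (k0 + d)) (2 ^ Suc (k0 + d))
      = gap_sum h a (2 ^ k0) (2 ^ (k0 + Suc d))"
    unfolding gap_sum_def add_Suc_right
    by (rule sum.atLeastLessThan_concat) (simp_all add: power_increasing)
  then show ?case using Suc by simp
qed (simp add: gap_sum_def)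

lemma gap_sum_eq_sum_index_sets:
  "gap_sum h a N0 N1 =
     (\<Sum>(j, r, Y) \<in> (SIGMA j:{N0..<N1}. SIGMA r:{1..j}. {Y. Y \<subseteq> {j + 1..<j + r} \<and> card Y = h - 2}).
        1 / (a (j + r) - a j) ^ (h - 1))"
proof -
  define YS where "YS j r = {Y. Y \<subseteq> {j + 1..<j + r} \<and> card Y = h - 2}" for j r :: nat
  have finYS: "finite (YS j r)" for j r
    unfolding YS_def by (rule finite_subset[of _ "Pow {j + 1..<j + r}"]) auto
  have "card (YS j r) = (r - 1) choose (h - 2)" for j r
    using n_subsets[of "{j + 1..<j + r}" "h - 2"] unfolding YS_def by simp
  then have summand: "real ((r - 1) choose (h - 2)) / (a (j + r) - a j) ^ (h - 1)
      = (\<Sum>Y\<in>YS j r. 1 / (a (j + r) - a j) ^ (h - 1))" for j r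
    by simp
  have "gap_sum h a N0 N1 = (\<Sum>j\<in>{N0..<N1}. \<Sum>r\<in>{1..j}. \<Sum>Y\<in>YS j r. 1 / (a (j + r) - a j) ^ (h - 1))"
    by (simp only: gap_sum_def summand)
  also have "\<dots> = (\<Sum>j\<in>{N0..<N1}. \<Sum>(r, Y)\<in>(SIGMA r:{1..j}. YS j r). 1 / (a (j + r) - a j) ^ (h - 1))"
    by (intro sum.cong refl sum.Sigma) (auto simp: finYS)
  also have "\<dots> = (\<Sum>(j, r, Y) \<in> (SIGMA j:{N0..<N1}. SIGMA r:{1..j}. YS j r). 1 / (a (j + r) - a j) ^ (h - 1))"
    by (rule sum.Sigma) (auto simp: finYS intro!: finite_SigmaI)
  finally show ?thesis unfolding YS_def .
qed

lemma insert_endpoints: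
  fixes j r :: nat
  assumes r: "1 \<le> r" and Y: "Y \<subseteq> {j + 1..<j + r}"
  defines "J \<equiv> insert j (insert (j + r) Y)"
  shows "finite J" "card J = card Y + 2" "Min J = j" "Max J = j + r" "J - {j, j + r} = Y"
proof -
  have fY: "finite Y" by (rule finite_subset[OF Y]) simp
  then show "finite J" unfolding J_def by simp
  have bnd: "j < y \<and> y < j + r" if "y \<in> Y" for y using Y that by (auto simp: subset_iff Suc_le_eq)
  then have "j \<notin> Y" "j + r \<notin> Y" by blast+
  then show "card J = card Y + 2" unfolding J_def using fY r by simp
  show "Min J = j" unfolding J_def using fY bnd by (intro Min_eqI) fastforce+
  show "Max J = j + r" unfolding J_def using fY bnd by (intro Max_eqI) fastforce+
  show "J - {j, j + r} = Y" unfolding J_def using bnd by blast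
qed

text \<open>The index sets of a gap sum are mapped injectively to h-element subsets of A via a,
  with diameter a_{j+r} - a_j \<le> a_{2 N1}.\<close>

lemma Ch_set_gap_sum_le:
  fixes a :: "nat \<Rightarrow> int"
  assumes Ch: "Ch_set h g A" and h2: "2 \<le> h" and g1: "1 \<le> g" and sm: "strict_mono a"
    and aA: "\<And>n. a n \<in> A" and apos: "\<And>n. 0 \<le> a n"
  shows "gap_sum h (\<lambda>n. real_of_int (a n)) N0 N1 \<le> real (g - 1) * harm (nat (a (2 * N1)))"
proof -
  define I where "I = (SIGMA j:{N0..<N1}. SIGMA r:{1..j}. {Y. Y \<subseteq> {j + 1..<j + r} \<and> card Y = h - 2})"
  define J where "J = (\<lambda>(j::nat, r::nat, Y::nat set). insert j (insert (j + r) Y))"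
  define \<Phi> where "\<Phi> = (`) a \<circ> J"
  have finI: "finite I"
    unfolding I_def by (intro finite_SigmaI) (auto intro: finite_subset[of _ "Pow {_..<_}"])
  have injA: "inj a" using sm by (rule strict_mono_imp_inj_on)
  have monoA: "mono a" using sm by (rule strict_mono_mono)
  have \<Phi>: "\<Phi> (j, r, Y) \<subseteq> A \<and> finite (\<Phi> (j, r, Y)) \<and> card (\<Phi> (j, r, Y)) = h
      \<and> Min (\<Phi> (j, r, Y)) = a j \<and> Max (\<Phi> (j, r, Y)) = a (j + r)" if "(j, r, Y) \<in> I" for j r Y
  proof -
    let ?J = "insert j (insert (j + r) Y)"
    have r: "1 \<le> r" and Y: "Y \<subseteq> {j + 1..<j + r}" "card Y = h - 2" using that unfolding I_def by auto
    note J = insert_endpoints[OF r Y(1)]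
    have "card (a ` ?J) = card ?J" by (rule card_image[OF inj_on_subset[OF injA subset_UNIV]])
    then have "card (a ` ?J) = h" using J(2) Y(2) h2 by linarith
    moreover have "?J \<noteq> {}" by simp
    ultimately show ?thesis unfolding \<Phi>_def J_def using J aA
        mono_Min_commute[OF monoA J(1)] mono_Max_commute[OF monoA J(1)] by auto
  qed
  have "inj_on \<Phi> I"
  proof (rule inj_onI)
    fix i i' assume i: "i \<in> I" "i' \<in> I" and eq: "\<Phi> i = \<Phi> i'"
    obtain j r Y j' r' Y' where ii: "i = (j, r, Y)" "i' = (j', r', Y')" by (cases i, cases i') auto
    have r: "1 \<le> r" "1 \<le> r'" and Y: "Y \<subseteq> {j + 1..<j + r}" "Y' \<subseteq> {j' + 1..<j' + r'}"
      using i unfolding I_def ii by auto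
    have "a ` J i = a ` J i'" using eq unfolding \<Phi>_def by simp
    then have "J i = J i'" by (simp only: inj_image_eq_iff[OF injA])
    then show "i = i'"
      using insert_endpoints[OF r(1) Y(1)] insert_endpoints[OF r(2) Y(2)] unfolding ii J_def
      by (metis add_left_cancel case_prod_conv)
  qed
  then have "gap_sum h (\<lambda>n. real_of_int (a n)) N0 N1
      = (\<Sum>X\<in>\<Phi> ` I. 1 / real_of_int (Max X - Min X) ^ (h - 1))"
    unfolding gap_sum_eq_sum_index_sets I_def[symmetric]
    by (subst sum.reindex) (auto simp: \<Phi> intro!: sum.cong)
  also have "\<dots> \<le> real (g - 1) * harm (nat (a (2 * N1)))"
  proof (rule Ch_set_sum_inverse_diameter_power_le[OF Ch h2 g1])
    show "finite (\<Phi> ` I)" using finI by simp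
    fix X assume "X \<in> \<Phi> ` I"
    then obtain j r Y where i: "(j, r, Y) \<in> I" "X = \<Phi> (j, r, Y)" by auto
    then have "a (j + r) \<le> a (2 * N1)" unfolding I_def by (intro monoD[OF monoA]) auto
    then show "X \<subseteq> A \<and> finite X \<and> card X = h \<and> Max X - Min X \<le> int (nat (a (2 * N1)))"
      using \<Phi>[OF i(1)] apos[of j] i(2) by auto
  qed
  finally show ?thesis .
qed

lemma harm_le_one_plus_ln: "1 \<le> n \<Longrightarrow> harm n \<le> 1 + ln (real n)"
proof (induction n rule: nat_induct_at_least)
  case (Suc n)
  have n: "0 < real n" using Suc by simp
  have "ln (real n / real (Suc n)) \<le> real n / real (Suc n) - 1"
    by (rule ln_le_minus_one) (use n in simp)
  then have "inverse (real (Suc n)) \<le> ln (real (Suc n)) - ln (real n)"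
    using n by (simp add: ln_div field_simps)
  then show ?case using Suc.IH by (simp add: harm_Suc)
qed (simp add: harm_def)

lemma Ch_set_gap_sum_le_ln:
  fixes a :: "nat \<Rightarrow> int"
  assumes Ch: "Ch_set h g A" and h2: "2 \<le> h" and g1: "1 \<le> g" and sm: "strict_mono a"
    and aA: "\<And>n. a n \<in> A" and apos: "\<And>n. 0 < a n"
  shows "gap_sum h (\<lambda>n. real_of_int (a n)) N0 N1 \<le> real (g - 1) * (1 + ln (real_of_int (a (2 * N1))))"
proof -
  have "harm (nat (a (2 * N1))) \<le> 1 + ln (real (nat (a (2 * N1))))"
    using apos by (intro harm_le_one_plus_ln) (simp add: Suc_le_eq)
  then have "real (g - 1) * harm (nat (a (2 * N1))) \<le> real (g - 1) * (1 + ln (real_of_int (a (2 * N1))))"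
    using apos[of "2 * N1"] by (intro mult_left_mono) simp_all
  moreover have "gap_sum h (\<lambda>n. real_of_int (a n)) N0 N1 \<le> real (g - 1) * harm (nat (a (2 * N1)))"
    using apos by (intro Ch_set_gap_sum_le[OF Ch h2 g1 sm aA]) (simp add: less_imp_le)
  ultimately show ?thesis by linarith
qed

subsection \<open>Gap sums of polynomially growing sequences\<close>

text \<open>Markov's inequality: at least half of the x_j are at most 2B / card S.\<close>

lemma sum_inverse_power_ge_of_sum_le:
  fixes x :: "nat \<Rightarrow> real"
  assumes S: "finite S" and pos: "\<And>j. j \<in> S \<Longrightarrow> 0 < x j" and sum: "(\<Sum>j\<in>S. x j) \<le> B" and B: "0 < B"
  shows "(real (card S) / 2) * (real (card S) / (2 * B)) ^ p \<le> (\<Sum>j\<in>S. 1 / x j ^ p)"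
proof (cases "S = {}")
  case False
  let ?n = "real (card S)"
  have n: "0 < ?n" using S False by (simp add: card_gt_0_iff)
  define T where "T = 2 * B / ?n"
  have T: "0 < T" using B n by (simp add: T_def)
  let ?G = "{j\<in>S. x j \<le> T}"
  have "real (card (S - ?G)) * T = (\<Sum>j\<in>S - ?G. T)" by simp
  also have "\<dots> \<le> (\<Sum>j\<in>S - ?G. x j)" by (rule sum_mono) auto
  also have "\<dots> \<le> (\<Sum>j\<in>S. x j)" by (rule sum_mono2) (use S pos in \<open>auto intro: less_imp_le\<close>)
  finally have "real (card (S - ?G)) * T \<le> B" using sum by linarith
  then have "real (card (S - ?G)) \<le> ?n / 2" using n B unfolding T_def by (simp add: field_simps)
  moreover have "card S = card ?G + card (S - ?G)"
    using S by (metis (no_types, lifting) card_Diff_subset card_mono le_add_diff_inverse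
        mem_Collect_eq subsetI finite_subset)
  ultimately have cG: "?n / 2 \<le> real (card ?G)" by simp
  have "(?n / 2) * (?n / (2 * B)) ^ p \<le> real (card ?G) * (1 / T ^ p)"
    using cG B by (intro mult_mono) (simp_all add: T_def power_divide)
  also have "\<dots> = (\<Sum>j\<in>?G. 1 / T ^ p)" by simp
  also have "\<dots> \<le> (\<Sum>j\<in>?G. 1 / x j ^ p)"
  proof (rule sum_mono)
    fix j assume "j \<in> ?G"
    then have "0 < x j" "x j \<le> T" using pos by auto
    then show "1 / T ^ p \<le> 1 / x j ^ p" by (intro divide_left_mono power_mono) simp_all
  qed
  also have "\<dots> \<le> (\<Sum>j\<in>S. 1 / x j ^ p)"
    by (rule sum_mono2) (auto simp: S less_imp_le[OF pos])
  finally show ?thesis .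
qed simp

lemma sum_gaps_le:
  fixes a :: "nat \<Rightarrow> real"
  assumes mono: "mono a" and nn: "\<And>n. 0 \<le> a n" and r: "r \<le> m"
  shows "(\<Sum>j\<in>{m..<2 * m}. a (j + r) - a j) \<le> real r * a (3 * m)"
  using r
proof (induction r)
  case (Suc r)
  have "(\<Sum>j\<in>{m..<2 * m}. a (j + Suc r) - a j) =
        (\<Sum>j\<in>{m..<2 * m}. a (j + r) - a j) + (\<Sum>j\<in>{m..<2 * m}. a (Suc j + r) - a (j + r))"
    by (simp add: sum.distrib[symmetric])
  also have "(\<Sum>j\<in>{m..<2 * m}. a (Suc j + r) - a (j + r)) = a (2 * m + r) - a (m + r)"
    using sum_Suc_diff'[of m "2 * m" "\<lambda>i. a (i + r)"] by simp
  also have "\<dots> \<le> a (3 * m)"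
    using monoD[OF mono, of "2 * m + r" "3 * m"] nn[of "m + r"] Suc.prems by simp
  finally show ?case using Suc by (simp add: algebra_simps)
qed simp

lemma gap_sum_block_ge:
  fixes a :: "nat \<Rightarrow> real"
  assumes sm: "strict_mono a" and nn: "\<And>n. 0 \<le> a n" and m: "1 \<le> m"
  shows "(real m / 2) * (real m / (2 * a (3 * m))) ^ (h - 1)
      * (\<Sum>r\<in>{1..m}. real ((r - 1) choose (h - 2)) / real r ^ (h - 1)) \<le> gap_sum h a m (2 * m)"
proof -
  let ?T = "(real m / 2) * (real m / (2 * a (3 * m))) ^ (h - 1)"
  let ?w = "\<lambda>j r. real ((r - 1) choose (h - 2)) / (a (j + r) - a j) ^ (h - 1)"
  have pos: "0 < a (j + r) - a j" if "1 \<le> r" for j r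
    using sm that unfolding strict_mono_def by simp
  have "a 0 < a (3 * m)" using sm m unfolding strict_mono_def by simp
  then have A: "0 < a (3 * m)" using nn[of 0] by linarith
  have markov: "?T / real r ^ (h - 1) \<le> (\<Sum>j\<in>{m..<2 * m}. 1 / (a (j + r) - a j) ^ (h - 1))"
    if r: "r \<in> {1..m}" for r
  proof -
    have "real m / (2 * (real r * a (3 * m))) = (real m / (2 * a (3 * m))) / real r" by simp
    then have "?T / real r ^ (h - 1) = (real m / 2) * (real m / (2 * (real r * a (3 * m)))) ^ (h - 1)"
      by (simp only: power_divide times_divide_eq_right)
    also have "\<dots> \<le> (\<Sum>j\<in>{m..<2 * m}. 1 / (a (j + r) - a j) ^ (h - 1))"
      using sum_inverse_power_ge_of_sum_le[of "{m..<2 * m}" "\<lambda>j. a (j + r) - a j" "real r * a (3 * m)"]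
        sum_gaps_le[OF strict_mono_mono[OF sm] nn, of r m] pos r A by simp
    finally show ?thesis .
  qed
  have "?T * (\<Sum>r\<in>{1..m}. real ((r - 1) choose (h - 2)) / real r ^ (h - 1))
      = (\<Sum>r\<in>{1..m}. real ((r - 1) choose (h - 2)) * (?T / real r ^ (h - 1)))"
    by (simp add: sum_distrib_left mult.commute)
  also have "\<dots> \<le> (\<Sum>r\<in>{1..m}. real ((r - 1) choose (h - 2))
      * (\<Sum>j\<in>{m..<2 * m}. 1 / (a (j + r) - a j) ^ (h - 1)))"
    using markov by (intro sum_mono mult_left_mono) auto
  also have "\<dots> = (\<Sum>r\<in>{1..m}. \<Sum>j\<in>{m..<2 * m}. ?w j r)"
    by (simp add: sum_distrib_left)
  also have "\<dots> = (\<Sum>j\<in>{m..<2 * m}. \<Sum>r\<in>{1..m}. ?w j r)" by (rule sum.swap)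
  also have "\<dots> \<le> gap_sum h a m (2 * m)"
    unfolding gap_sum_def
  proof (intro sum_mono sum_mono2)
    fix j r assume "r \<in> {1..j} - {1..m}"
    then show "0 \<le> ?w j r" using pos[of r j] by simp
  qed auto
  finally show ?thesis .
qed

lemma one_le_double_power_self: "1 \<le> (2 * real q) ^ q"
proof (cases "q = 0")
  case False
  then have "1 \<le> 2 * real q" by simp
  then show ?thesis by (rule one_le_power)
qed simp

lemma inverse_le_binomial_div_power:
  assumes r: "q + 2 \<le> r"
  shows "1 / ((2 * real q) ^ q * real r) \<le> real ((r - 1) choose q) / real r ^ Suc q"
proof -
  have "real r / (2 * real q) \<le> real (r - 1) / real q"
    using r by (cases "q = 0") (auto simp: field_simps)
  then have "(real r / (2 * real q)) ^ q \<le> (real (r - 1) / real q) ^ q"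
    by (intro power_mono) auto
  also have "\<dots> \<le> real ((r - 1) choose q)" using r by (intro binomial_ge_n_over_k_pow_k) simp
  finally have c: "(real r / (2 * real q)) ^ q \<le> real ((r - 1) choose q)" .
  have rp: "0 < real r" using r by simp
  have "1 / ((2 * real q) ^ q * real r) = (real r / (2 * real q)) ^ q / real r ^ Suc q"
    using rp by (simp add: power_divide field_simps)
  also have "\<dots> \<le> real ((r - 1) choose q) / real r ^ Suc q"
    using c rp by (intro divide_right_mono) auto
  finally show ?thesis .
qed

lemma ln_le_sum_binomial_inverse_power:
  assumes lnm: "2 * real h \<le> ln (real m)" and h2: "2 \<le> h"
  shows "ln (real m) / (2 * (2 * real (h - 2)) ^ (h - 2))
    \<le> (\<Sum>r\<in>{1..m}. real ((r - 1) choose (h - 2)) / real r ^ (h - 1))"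
proof -
  define q where "q = h - 2"
  define b where "b = (2 * real q) ^ q"
  have b1: "1 \<le> b" unfolding b_def by (rule one_le_double_power_self)
  have hq: "h - 1 = Suc q" using h2 unfolding q_def by simp
  have m1: "q + 1 \<le> m"
  proof (rule ccontr)
    assume "\<not> q + 1 \<le> m"
    then have "real m \<le> real h" unfolding q_def by simp
    moreover have "0 < real m" using lnm h2 by (cases "m = 0") auto
    ultimately have "ln (real m) \<le> ln (real h)" by simp
    also have "\<dots> < real h" using ln_less_self[of "real h"] h2 by simp
    finally show False using lnm h2 by simp
  qed
  have split: "{1..m} = {1..q + 1} \<union> {q + 2..m}" using m1 by auto
  have "ln (real m) \<le> ln (real m + 1)" using m1 by simp
  also have "\<dots> \<le> harm m" by (rule ln_le_harm)
  also have "harm m = (\<Sum>r\<in>{1..q + 1}. 1 / real r) + (\<Sum>r\<in>{q + 2..m}. 1 / real r)"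
    unfolding harm_def split by (subst sum.union_disjoint) (auto simp: divide_inverse)
  also have "(\<Sum>r\<in>{1..q + 1}. 1 / real r) \<le> real (q + 1)"
    using sum_bounded_above[of "{1..q + 1}" "\<lambda>r. 1 / real r" 1] by simp
  finally have "ln (real m) / 2 \<le> (\<Sum>r\<in>{q + 2..m}. 1 / real r)"
    using lnm h2 unfolding q_def by simp
  then have "ln (real m) / (2 * b) \<le> (\<Sum>r\<in>{q + 2..m}. 1 / real r) / b"
    using b1 by (simp add: divide_right_mono flip: divide_divide_eq_left)
  also have "\<dots> = (\<Sum>r\<in>{q + 2..m}. 1 / (b * real r))" by (simp add: sum_divide_distrib mult.commute)
  also have "\<dots> \<le> (\<Sum>r\<in>{q + 2..m}. real ((r - 1) choose q) / real r ^ Suc q)"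
    unfolding b_def by (intro sum_mono inverse_le_binomial_div_power) auto
  also have "\<dots> \<le> (\<Sum>r\<in>{1..m}. real ((r - 1) choose q) / real r ^ Suc q)"
    by (rule sum_mono2) auto
  finally show ?thesis unfolding b_def q_def hq[unfolded q_def] .
qed

lemma dense_block_weight_ge:
  fixes A b c \<alpha> :: real and m h :: nat
  assumes h2: "2 \<le> h" and c: "0 < c" and \<alpha>: "0 < \<alpha>" and b: "1 \<le> b" and m3: "3 \<le> m"
    and A: "0 < A" and dense: "c * A ^ (h - 1) \<le> real (3 * m + 1) ^ h * ln A"
    and lnA: "ln A \<le> \<alpha> * ln (real (3 * m))"
  shows "c / (2 ^ (h + 2) * b * \<alpha> * 4 ^ h)
    \<le> (real m / 2) * (real m / (2 * A)) ^ (h - 1) * (ln (real m) / (2 * b))"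
proof -
  define P where "P = A ^ (h - 1)"
  define L where "L = ln (real m)"
  define M where "M = real m ^ h"
  have P: "0 < P" unfolding P_def using A by simp
  have M: "0 < M" unfolding M_def using m3 by simp
  have T: "(real m / 2) * (real m / (2 * A)) ^ (h - 1) = M / (2 ^ h * P)"
  proof -
    have hS: "h = Suc (h - 1)" using h2 by simp
    have "(real m / 2) * (real m / (2 * A)) ^ (h - 1) = (real m / 2) * (real m ^ (h - 1) / (2 ^ (h - 1) * P))"
      unfolding P_def by (simp add: power_divide power_mult_distrib)
    also have "\<dots> = (real m * real m ^ (h - 1)) / (2 * 2 ^ (h - 1) * P)" by (simp add: field_simps)
    also have "\<dots> = M / (2 ^ h * P)" unfolding M_def by (subst (1 2) hS) simp
    finally show ?thesis .
  qed
  have "0 < c * P" using c P by simp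
  then have "0 < real (3 * m + 1) ^ h * ln A" using dense unfolding P_def by linarith
  then have lnA_pos: "0 < ln A" by (simp add: zero_less_mult_iff)
  have "ln (real (3 * m)) = ln 3 + L" unfolding L_def using m3 by (simp add: ln_mult)
  moreover have "ln 3 \<le> L" unfolding L_def using m3 by simp
  ultimately have lnA': "ln A \<le> \<alpha> * (2 * L)"
    using lnA \<alpha> by (smt (verit) mult_left_mono)
  have "real (3 * m + 1) \<le> 4 * real m" using m3 by simp
  then have "real (3 * m + 1) ^ h \<le> (4 * real m) ^ h" by (intro power_mono) auto
  then have p4: "real (3 * m + 1) ^ h \<le> 4 ^ h * M" unfolding M_def by (simp add: power_mult_distrib)
  have "c * P \<le> real (3 * m + 1) ^ h * ln A" using dense unfolding P_def .
  also have "\<dots> \<le> (4 ^ h * M) * ln A" using p4 lnA_pos by (intro mult_right_mono) auto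
  also have "\<dots> \<le> (4 ^ h * M) * (\<alpha> * (2 * L))" using lnA' M by (intro mult_left_mono) auto
  finally have key: "c * P \<le> 2 * \<alpha> * 4 ^ h * M * L" by (simp add: ac_simps)
  have "c / (2 ^ (h + 2) * b * \<alpha> * 4 ^ h) = (c * P) / (2 ^ (h + 2) * b * \<alpha> * 4 ^ h * P)" using P by simp
  also have "\<dots> \<le> (2 * \<alpha> * 4 ^ h * M * L) / (2 ^ (h + 2) * b * \<alpha> * 4 ^ h * P)"
    using key P b \<alpha> by (intro divide_right_mono) auto
  also have "\<dots> = M / (2 ^ h * P) * (L / (2 * b))" using \<alpha> b P by (simp add: field_simps power_add)
  finally show ?thesis unfolding T L_def .
qed

lemma gap_sum_dyadic_block_ge:
  fixes a :: "nat \<Rightarrow> real" and c \<alpha> :: real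
  assumes sm: "strict_mono a" and nn: "\<And>n. 0 \<le> a n" and h2: "2 \<le> h" and c: "0 < c" and \<alpha>: "0 < \<alpha>"
    and k: "n0 + 3 * h \<le> k"
    and dense: "\<And>n. n0 \<le> n \<Longrightarrow> c * a n ^ (h - 1) \<le> real (n + 1) ^ h * ln (a n)"
    and lna: "\<And>n. n0 \<le> n \<Longrightarrow> ln (a n) \<le> \<alpha> * ln (real n)"
  shows "c / (2 ^ (h + 2) * (2 * real (h - 2)) ^ (h - 2) * \<alpha> * 4 ^ h) \<le> gap_sum h a (2 ^ k) (2 ^ Suc k)"
proof -
  define m :: nat where "m = 2 ^ k"
  let ?T = "(real m / 2) * (real m / (2 * a (3 * m))) ^ (h - 1)"
  have "k < m" unfolding m_def by (rule less_exp)
  then have m: "n0 \<le> 3 * m" "3 \<le> m" using k h2 by linarith+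
  have "2 * real h \<le> real k * (2 / 3)" using k by simp
  also have "\<dots> \<le> real k * ln 2" using ln2_ge_two_thirds by (intro mult_left_mono) auto
  also have "\<dots> = ln (real m)" unfolding m_def by (simp add: ln_realpow)
  finally have lnm: "2 * real h \<le> ln (real m)" .
  have "a 0 < a (3 * m)" using sm m unfolding strict_mono_def by simp
  then have A: "0 < a (3 * m)" using nn[of 0] by linarith
  have "c / (2 ^ (h + 2) * (2 * real (h - 2)) ^ (h - 2) * \<alpha> * 4 ^ h)
      \<le> ?T * (ln (real m) / (2 * (2 * real (h - 2)) ^ (h - 2)))"
    using dense_block_weight_ge[OF h2 c \<alpha> one_le_double_power_self m(2) A dense[OF m(1)] lna[OF m(1)]] .
  also have "\<dots> \<le> ?T * (\<Sum>r\<in>{1..m}. real ((r - 1) choose (h - 2)) / real r ^ (h - 1))"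
    using ln_le_sum_binomial_inverse_power[OF lnm h2] A by (intro mult_left_mono) auto
  also have "\<dots> \<le> gap_sum h a m (2 * m)"
    using gap_sum_block_ge[OF sm nn] m by simp
  finally show ?thesis unfolding m_def by simp
qed

subsection \<open>Growth of a dense enumeration\<close>

lemma ln_le_of_le_mult_ln:
  fixes x Y :: real
  assumes x: "1 \<le> x" and Y: "1 \<le> Y" and le: "x \<le> Y * ln x"
  shows "ln x \<le> 2 * ln (2 * Y)"
proof -
  have sx: "0 < sqrt x" using x by simp
  have "ln (sqrt x) \<le> sqrt x - 1" by (rule ln_le_minus_one[OF sx])
  then have "ln x \<le> 2 * sqrt x" using x ln_sqrt[of x] by simp
  then have "x \<le> Y * (2 * sqrt x)" using le Y by (smt (verit) mult_left_mono)
  moreover have "sqrt x * sqrt x = x" using x by simp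
  ultimately have "sqrt x * sqrt x \<le> (2 * Y) * sqrt x" by simp
  then have "sqrt x \<le> 2 * Y" using sx by (rule mult_right_le_imp_le)
  then have "ln (sqrt x) \<le> ln (2 * Y)" using sx Y by (subst ln_le_cancel_iff) auto
  then show ?thesis using x ln_sqrt[of x] by simp
qed

lemma power_bound_of_density_bound:
  fixes C x :: real and n h :: nat
  assumes h1: "1 \<le> h" and C: "0 < C" and x: "1 < x"
    and f: "C < real (n + 1) * (x * ln x) powr (1 / real h) / x"
  shows "C ^ h * x ^ (h - 1) < real (n + 1) ^ h * ln x"
proof -
  define y where "y = x * ln x"
  have y: "0 < y" unfolding y_def using x by simp
  have "C * x < real (n + 1) * y powr (1 / real h)"
    using f x unfolding y_def by (simp add: pos_less_divide_eq)
  then have "(C * x) ^ h < (real (n + 1) * y powr (1 / real h)) ^ h"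
    using C x h1 by (intro power_strict_mono) auto
  also have "\<dots> = real (n + 1) ^ h * (y powr (1 / real h)) powr real h"
    using y by (simp add: power_mult_distrib powr_realpow)
  also have "\<dots> = real (n + 1) ^ h * y" using h1 y by (simp add: powr_powr)
  finally have "(C * x) ^ h < real (n + 1) ^ h * y" .
  moreover have "(C * x) ^ h = (C ^ h * x ^ (h - 1)) * x"
    using h1 power_Suc2[of x "h - 1"] by (simp add: power_mult_distrib)
  ultimately have "(C ^ h * x ^ (h - 1)) * x < (real (n + 1) ^ h * ln x) * x"
    unfolding y_def by (simp add: ac_simps)
  then show ?thesis using x by simp
qed

lemma ln_le_of_power_bound:
  fixes c x :: real and n h :: nat
  assumes c: "1 \<le> c" and h2: "2 \<le> h" and x: "1 \<le> x" and n: "3 \<le> n"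
    and bound: "c * x ^ (h - 1) \<le> real (n + 1) ^ h * ln x"
  shows "ln x \<le> (4 * real h + 2) * ln (real n)"
proof -
  have "x \<le> x ^ (h - 1)" using x h2 power_increasing[of 1 "h - 1" x] by simp
  also have "\<dots> \<le> c * x ^ (h - 1)" using c x by (simp add: mult_le_cancel_right1 one_le_power)
  finally have "ln x \<le> 2 * ln (2 * real (n + 1) ^ h)"
    using bound by (intro ln_le_of_le_mult_ln x) (simp_all add: one_le_power)
  also have "\<dots> = 2 * ln 2 + 2 * real h * ln (real (n + 1))"
    by (simp add: ln_mult ln_realpow)
  also have "\<dots> \<le> 2 * ln (real n) + 2 * real h * (2 * ln (real n))"
  proof -
    have "real (n + 1) \<le> real n ^ 2"
      using n mult_le_mono1[of 3 n n] unfolding power2_eq_square of_nat_mult[symmetric] of_nat_le_iff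
      by linarith
    then have "ln (real (n + 1)) \<le> ln (real n ^ 2)" using n by (subst ln_le_cancel_iff) auto
    then have "ln (real (n + 1)) \<le> 2 * ln (real n)" using n by (simp add: ln_realpow)
    moreover have "ln 2 \<le> ln (real n)" using n by simp
    ultimately show ?thesis by (intro add_mono mult_left_mono) auto
  qed
  also have "\<dots> = (4 * real h + 2) * ln (real n)" by (simp add: algebra_simps)
  finally show ?thesis .
qed

lemma strict_mono_int_ge:
  fixes a :: "nat \<Rightarrow> int"
  assumes "strict_mono a"
  shows "a 0 + int n \<le> a n"
proof (induction n)
  case (Suc n)
  have "a n < a (Suc n)" using assms unfolding strict_mono_def by simp
  then show ?case using Suc by simp
qed simp

lemma enumerate_positive_int_set:
  assumes Apos: "A \<subseteq> {0<..}" and inf: "infinite A"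
  obtains a :: "nat \<Rightarrow> int" where "strict_mono a" "range a = A"
proof -
  define B where "B = nat ` A"
  have inj: "inj_on nat A" by (rule inj_onI) (use Apos in force)
  have infB: "infinite B" unfolding B_def using inj inf finite_image_iff by blast
  have nat_inverse: "int (nat x) = x" if "x \<in> A" for x using that Apos by force
  have "strict_mono (\<lambda>n. int (enumerate B n))"
    unfolding strict_mono_def using infB by (simp add: enumerate_mono)
  moreover have "range (\<lambda>n. int (enumerate B n)) = A"
  proof -
    have "range (enumerate B) = B" using range_enumerate[OF infB] by simp
    then show ?thesis unfolding B_def image_image[symmetric] using nat_inverse by force
  qed
  ultimately show ?thesis using that by blast
qed

lemma count_fn_enumeration:
  fixes a :: "nat \<Rightarrow> int"
  assumes sm: "strict_mono a"
  shows "count_fn (range a) (real_of_int (a n)) = n + 1"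
proof -
  have "{b \<in> range a. real_of_int b \<le> real_of_int (a n)} = a ` {0..n}"
    using sm by (auto simp: strict_mono_less_eq)
  moreover have "card (a ` {0..n}) = n + 1"
    using strict_mono_imp_inj_on[OF sm] by (simp add: card_image inj_on_subset)
  ultimately show ?thesis unfolding count_fn_def by simp
qed

subsection \<open>Sparseness of C_h[g] sets\<close>

text \<open>The factor (2 (g-1) \<alpha> + 1) times the reciprocal of the lower bound for a dyadic block
  from gap_sum_dyadic_block_ge, where \<alpha> = 4h + 2 is the growth exponent from ln_le_of_power_bound.\<close>

definition density_threshold :: "nat \<Rightarrow> nat \<Rightarrow> real" where
  "density_threshold h g = (2 * real (g - 1) * (4 * real h + 2) + 1)
     * (2 ^ (h + 2) * (2 * real (h - 2)) ^ (h - 2) * (4 * real h + 2) * 4 ^ h)"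

lemma one_le_density_threshold: "1 \<le> density_threshold h g"
  unfolding density_threshold_def
  by (intro mult_ge1_I one_le_power one_le_double_power_self) auto

lemma Ch_set_enumeration_not_dense:
  fixes a :: "nat \<Rightarrow> int"
  assumes Ch: "Ch_set h g A" and h2: "2 \<le> h" and g1: "1 \<le> g"
    and sm: "strict_mono a" and aA: "\<And>n. a n \<in> A" and apos: "\<And>n. 0 < a n"
    and c: "density_threshold h g \<le> c"
  shows "\<not> (\<forall>\<^sub>F n in sequentially.
      c * real_of_int (a n) ^ (h - 1) < real (n + 1) ^ h * ln (real_of_int (a n)))"
proof
  define ar where "ar n = real_of_int (a n)" for n
  define \<alpha> :: real where "\<alpha> = 4 * real h + 2"
  define B :: real where "B = 2 ^ (h + 2) * (2 * real (h - 2)) ^ (h - 2) * \<alpha> * 4 ^ h"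
  define K where "K = real (g - 1)"
  assume "\<forall>\<^sub>F n in sequentially. c * real_of_int (a n) ^ (h - 1) < real (n + 1) ^ h * ln (real_of_int (a n))"
  then obtain N where N: "\<And>n. N \<le> n \<Longrightarrow> c * ar n ^ (h - 1) < real (n + 1) ^ h * ln (ar n)"
    unfolding ar_def eventually_sequentially by blast
  define n0 where "n0 = max N 3"
  have dense: "c * ar n ^ (h - 1) \<le> real (n + 1) ^ h * ln (ar n)" if "n0 \<le> n" for n
    using N[of n] that unfolding n0_def by simp
  have smar: "strict_mono ar" using sm unfolding ar_def strict_mono_def by simp
  have ar1: "1 \<le> ar n" for n using apos[of n] unfolding ar_def by simp
  have c1: "1 \<le> c" using c one_le_density_threshold order.trans by blast
  have \<alpha>1: "1 \<le> \<alpha>" unfolding \<alpha>_def by simp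
  have lna: "ln (ar n) \<le> \<alpha> * ln (real n)" if "n0 \<le> n" for n
    unfolding \<alpha>_def using ln_le_of_power_bound[OF c1 h2 ar1 _ dense] that by (simp add: n0_def)
  define k0 where "k0 = n0 + 3 * h"
  define d where "d = k0 + 2"
  have "real d * (c / B) = (\<Sum>k\<in>{k0..<k0 + d}. c / B)" by simp
  also have "\<dots> \<le> (\<Sum>k\<in>{k0..<k0 + d}. gap_sum h ar (2 ^ k) (2 ^ Suc k))"
    using gap_sum_dyadic_block_ge[OF smar _ h2 _ _ _ dense lna] ar1 c1 \<alpha>1
    unfolding B_def k0_def by (intro sum_mono) (auto intro: order.trans[OF zero_le_one])
  also have "\<dots> = gap_sum h ar (2 ^ k0) (2 ^ (k0 + d))" by (rule gap_sum_dyadic_blocks)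
  also have "\<dots> \<le> K * (1 + ln (ar (2 * 2 ^ (k0 + d))))"
    unfolding K_def ar_def by (rule Ch_set_gap_sum_le_ln[OF Ch h2 g1 sm aA apos])
  also have "\<dots> \<le> K * (1 + \<alpha> * real (k0 + d + 1))"
  proof -
    have "n0 \<le> 2 * 2 ^ (k0 + d)" using less_exp[of "k0 + d"] unfolding k0_def by linarith
    then have "ln (ar (2 * 2 ^ (k0 + d))) \<le> \<alpha> * ln (2 ^ (k0 + d + 1))"
      using lna[of "2 * 2 ^ (k0 + d)"] by simp
    also have "\<dots> = \<alpha> * (real (k0 + d + 1) * ln 2)" by (simp only: ln_realpow[of 2] zero_less_numeral)
    also have "\<dots> \<le> \<alpha> * real (k0 + d + 1)"
      using ln_2_less_1 \<alpha>1 by (intro mult_left_mono mult_left_le) auto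
    finally show ?thesis unfolding K_def by (intro mult_left_mono) auto
  qed
  finally have upper: "real d * (c / B) \<le> K * (1 + \<alpha> * real (k0 + d + 1))" .
  have "0 < B" unfolding B_def using \<alpha>1 one_le_double_power_self[of "h - 2"] by simp
  then have "2 * K * \<alpha> + 1 \<le> c / B"
    using c unfolding density_threshold_def B_def K_def \<alpha>_def by (simp add: pos_le_divide_eq)
  then have "real d * (2 * K * \<alpha> + 1) \<le> real d * (c / B)" by (rule mult_left_mono) simp
  with upper have "real d * (2 * K * \<alpha> + 1) \<le> K * (1 + \<alpha> * real (k0 + d + 1))" by linarith
  moreover have "K \<le> K * \<alpha>" unfolding K_def using \<alpha>1 by (simp add: mult_le_cancel_left1)
  moreover have "real d * (2 * K * \<alpha> + 1) = 2 * (K * \<alpha>) * real k0 + 4 * (K * \<alpha>) + real k0 + 2"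
    "K * (1 + \<alpha> * real (k0 + d + 1)) = K + 2 * (K * \<alpha>) * real k0 + 3 * (K * \<alpha>)"
    unfolding d_def by (simp_all add: algebra_simps)
  ultimately show False by linarith
qed

lemma eventually_power_bound_of_Liminf_gt:
  fixes a :: "nat \<Rightarrow> int" and C :: real
  assumes sm: "strict_mono a" and apos: "\<And>n. 0 < a n" and C: "0 < C" and h1: "1 \<le> h"
    and gt: "ereal C < Liminf at_top
      (\<lambda>x. ereal (real (count_fn (range a) x) * (x * ln x) powr (1 / real h) / x))"
  shows "\<forall>\<^sub>F n in sequentially.
    C ^ h * real_of_int (a n) ^ (h - 1) < real (n + 1) ^ h * ln (real_of_int (a n))"
proof -
  let ?f = "\<lambda>x. real (count_fn (range a) x) * (x * ln x) powr (1 / real h) / x"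
  have "\<forall>\<^sub>F x in at_top. ereal C < ereal (?f x)" using gt by (rule less_LiminfD)
  then have ev: "\<forall>\<^sub>F x in at_top. C < ?f x" by simp
  have lim: "filterlim (\<lambda>n. real_of_int (a n)) at_top sequentially"
  proof (rule filterlim_at_top_mono[OF filterlim_real_sequentially always_eventually], rule allI)
    fix n show "real n \<le> real_of_int (a n)" using strict_mono_int_ge[OF sm, of n] apos[of 0] by simp
  qed
  have "\<forall>\<^sub>F n in sequentially. C < ?f (real_of_int (a n))"
    using eventually_compose_filterlim[OF ev lim] .
  moreover have "\<forall>\<^sub>F n in sequentially. 1 < real_of_int (a n)"
    using lim unfolding filterlim_at_top_dense by blast
  ultimately show ?thesis
  proof eventually_elim
    case (elim n)
    then have "C < real (n + 1) * (a n * ln (a n)) powr (1 / real h) / a n"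
      by (simp add: count_fn_enumeration[OF sm])
    then show ?case by (rule power_bound_of_density_bound[OF h1 C elim(2)])
  qed
qed

theorem theorem3:
  fixes g h :: nat
  assumes "2 \<le> h" and "h \<le> g"
  shows "\<exists>C::real. C > 0 \<and>
    (\<forall>A :: int set. A \<subseteq> {0<..} \<longrightarrow> infinite A \<longrightarrow> Ch_set h g A \<longrightarrow>
       Liminf at_top (\<lambda>x::real. ereal (real (count_fn A x) * (x * ln x) powr (1 / real h) / x))
         \<le> ereal C)"
proof -
  define C where "C = density_threshold h g powr (1 / real h)"
  have C: "0 < C" using one_le_density_threshold[of h g] unfolding C_def by simp
  have Ch_eq: "C ^ h = density_threshold h g"
    using one_le_density_threshold[of h g] assms(1)
    by (simp add: C_def powr_realpow[symmetric] powr_powr)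
  have "Liminf at_top (\<lambda>x. ereal (real (count_fn A x) * (x * ln x) powr (1 / real h) / x)) \<le> ereal C"
    if Apos: "A \<subseteq> {0<..}" and inf: "infinite A" and Ch: "Ch_set h g A" for A
  proof (rule ccontr)
    obtain a :: "nat \<Rightarrow> int" where sm: "strict_mono a" and A: "range a = A"
      using enumerate_positive_int_set[OF Apos inf] by blast
    have apos: "0 < a n" for n using A Apos by auto
    assume "\<not> ?thesis"
    then have "ereal C < Liminf at_top
        (\<lambda>x. ereal (real (count_fn (range a) x) * (x * ln x) powr (1 / real h) / x))"
      unfolding A by simp
    from eventually_power_bound_of_Liminf_gt[OF sm apos C _ this] assms(1)
    have "\<forall>\<^sub>F n in sequentially.
        density_threshold h g * real_of_int (a n) ^ (h - 1) < real (n + 1) ^ h * ln (real_of_int (a n))"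
      unfolding Ch_eq by simp
    then show False using Ch_set_enumeration_not_dense[OF Ch assms(1) _ sm _ apos order.refl] A assms by auto
  qed
  then show ?thesis using C by blast
qed

end
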